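(* Fix $d,k\in\mathbb N$ and let $A\in\mathbb R^{d^k\times d^k}$. Let $x=x_1\otimes\cdots\otimes x_k$, where $x_1,\dots,x_k\in\mathbb R^d$ are independent and each $x_i$ is either a Rademacher vector or a standard Gaussian vector $\mathcal N(0,I_d)$. Let $\bar A:=\frac{1}{2^k}\sum_{\mathcal V\subseteq[k]}A^{\Gamma_{\mathcal V}}$ be the average of all partial transposes of $A$. Then $$\operatorname{Var}[x^\top A x]\le\sum_{\mathcal S\subsetneq[k]}2^{k-|\mathcal S|}\,\big\|\operatorname{tr}_{\mathcal S}(\bar A)\big\|_F^2 .$$ Furthermore, if all $x_i$ are $\mathcal N(0,I_d)$, this inequality is an equality.
   Context: $\otimes$ is the standard Kronecker product; $[k]=\{1,\dots,k\}$. A Rademacher vector has iid entries uniform on $\{\pm1\}$. Identify $\mathbb R^{d^k\times d^k}$ with $(\mathbb R^{d\times d})^{\otimes k}$ ("$k$ subsystems of dimension $d$"). Partial trace: for $\mathcal S\subseteq[k]$, $\operatorname{tr}_{\mathcal S}:\mathbb R^{d^k\times d^k}\to\mathbb R^{d^{k-|\mathcal S|}\times d^{k-|\mathcal S|}}$ is the unique linear map with $\operatorname{tr}_{\mathcal S}(M_1\otimes\cdots\otimes M_k)=\big(\prod_{j\in\mathcal S}\operatorname{tr}(M_j)\big)\bigotimes_{j\notin\mathcal S}M_j$ for all $M_j\in\mathbb R^{d\times d}$ (for $\mathcal S=\emptyset$ it is the identity). Equivalently, for a single index, $\operatorname{tr}_{\{i\}}(A)=\sum_{j=1}^d(I^{\otimes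 i-1}\otimes e_j\otimes I^{\otimes k-i})^\top A(I^{\otimes i-1}\otimes e_j\otimes I^{\otimes k-i})$, with $I=I_d$ and $e_j\in\mathbb R^d$ standard basis vectors. Partial transpose: for $\mathcal V\subseteq[k]$, $A\mapsto A^{\Gamma_{\mathcal V}}$ is the unique linear map with $(M_1\otimes\cdots\otimes M_k)^{\Gamma_{\mathcal V}}=N_1\otimes\cdots\otimes N_k$ where $N_j=M_j^\top$ if $j\in\mathcal V$ and $N_j=M_j$ otherwise. The sum over $\mathcal S\subsetneq[k]$ ranges over all proper subsets of $[k]$ (including $\emptyset$). *)

theory Defs
  imports "HOL-Probability.Probability"
begin

text \<open>Multi-indices of the k-fold tensor product of R^d: extensional functions
  from a set of subsystems (a subset of {1..k}) to {0..<d}. A matrix in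
  R^(d^k x d^k) = (R^(d x d))^(tensor k) is a function of a pair of such multi-indices.\<close>

definition midx :: "nat set \<Rightarrow> nat \<Rightarrow> (nat \<Rightarrow> nat) set" where
  "midx T d = PiE T (\<lambda>_. {..<d})"

definition ptranspose :: "nat set \<Rightarrow> ((nat \<Rightarrow> nat) \<Rightarrow> (nat \<Rightarrow> nat) \<Rightarrow> real)
    \<Rightarrow> (nat \<Rightarrow> nat) \<Rightarrow> (nat \<Rightarrow> nat) \<Rightarrow> real" where
  "ptranspose V A a b = A (\<lambda>j. if j \<in> V then b j else a j) (\<lambda>j. if j \<in> V then a j else b j)"

text \<open>Partial trace over the subsystems in S; the result is indexed by multi-indices
  on the remaining subsystems {1..k} - S.\<close>
definition ptrace :: "nat \<Rightarrow> nat set \<Rightarrow> ((nat \<Rightarrow> nat) \<Rightarrow> (nat \<Rightarrow> nat) \<Rightarrow> real)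
    \<Rightarrow> (nat \<Rightarrow> nat) \<Rightarrow> (nat \<Rightarrow> nat) \<Rightarrow> real" where
  "ptrace d S A a b = (\<Sum>c\<in>midx S d.
      A (\<lambda>j. if j \<in> S then c j else a j) (\<lambda>j. if j \<in> S then c j else b j))"

definition frob2 :: "nat \<Rightarrow> nat set \<Rightarrow> ((nat \<Rightarrow> nat) \<Rightarrow> (nat \<Rightarrow> nat) \<Rightarrow> real) \<Rightarrow> real" where
  "frob2 d T B = (\<Sum>a\<in>midx T d. \<Sum>b\<in>midx T d. (B a b)\<^sup>2)"

definition ptavg :: "nat \<Rightarrow> ((nat \<Rightarrow> nat) \<Rightarrow> (nat \<Rightarrow> nat) \<Rightarrow> real)
    \<Rightarrow> (nat \<Rightarrow> nat) \<Rightarrow> (nat \<Rightarrow> nat) \<Rightarrow> real" where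
  "ptavg k A a b = (1 / 2 ^ k) * (\<Sum>V\<in>Pow {1..k}. ptranspose V A a b)"

definition tquad :: "nat \<Rightarrow> nat \<Rightarrow> ((nat \<Rightarrow> nat) \<Rightarrow> (nat \<Rightarrow> nat) \<Rightarrow> real)
    \<Rightarrow> (nat \<Rightarrow> nat \<Rightarrow> real) \<Rightarrow> real" where
  "tquad d k A x = (\<Sum>a\<in>midx {1..k} d. \<Sum>b\<in>midx {1..k} d.
      A a b * (\<Prod>i\<in>{1..k}. x i (a i) * x i (b i)))"

definition rademacher_rv :: "'s measure \<Rightarrow> ('s \<Rightarrow> real) \<Rightarrow> bool" where
  "rademacher_rv M Y \<longleftrightarrow> Y \<in> borel_measurable M \<and>
     measure M {\<omega> \<in> space M. Y \<omega> = 1} = 1/2 \<and> measure M {\<omega> \<in> space M. Y \<omega> = -1} = 1/2"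

definition gaussian_rv :: "'s measure \<Rightarrow> ('s \<Rightarrow> real) \<Rightarrow> bool" where
  "gaussian_rv M Y \<longleftrightarrow> distributed M lborel Y std_normal_density"

end

theory Submission
  imports Defs
begin

text \<open>Every partial transpose leaves the quadratic form \<open>x\<^sup>T A x\<close> of a product vector unchanged,
  so \<open>A\<close> may be replaced by the average \<open>A'\<close> of its partial transposes, which is invariant under
  every partial transpose. The coordinates have moments \<open>1, 0, 1, 0, \<mu>\<^sub>4\<close> with \<open>\<mu>\<^sub>4 = 3\<close> (Gaussian)
  or \<open>\<mu>\<^sub>4 = 1\<close> (Rademacher), so the fourth moments of a factor are given by a Wick-type formula in
  which the two crossed pairings carry a weight \<open>0 \<le> w \<le> 1\<close>, with \<open>w = 1\<close> in the Gaussian case.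
  Expanding \<open>E[(x\<^sup>T A' x)\<^sup>2]\<close> as a product over the subsystems of these three pairings, the
  invariance of \<open>A'\<close> makes both crossed pairings contribute the same; taking the trace pairing
  exactly on \<open>S\<close> yields \<open>2\<^bsup>k-|S|\<^esup>\<close> times a \<open>w\<close>-weighted squared Frobenius norm of \<open>tr\<^sub>S A'\<close>, and
  \<open>S = [k]\<close> yields \<open>(E x\<^sup>T A' x)\<^sup>2\<close>. Dropping the weights gives the bound, with equality when \<open>w = 1\<close>.\<close>

lemma finite_midx [simp]: "finite T \<Longrightarrow> finite (midx T d)"
  unfolding midx_def by (rule finite_PiE) auto

lemma override_on_in_midx:
  "c \<in> midx I d \<Longrightarrow> e \<in> midx I d \<Longrightarrow> override_on c e R \<in> midx I d"
  unfolding midx_def override_on_def PiE_iff extensional_def by auto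

lemma override_on_in_midx_Diff:
  "S \<subseteq> I \<Longrightarrow> a \<in> midx (I - S) d \<Longrightarrow> u \<in> midx S d \<Longrightarrow> override_on a u S \<in> midx I d"
  unfolding midx_def override_on_def PiE_iff extensional_def by auto

lemma restrict_in_midx: "a \<in> midx I d \<Longrightarrow> T \<subseteq> I \<Longrightarrow> restrict a T \<in> midx T d"
  unfolding midx_def by auto

lemma midx_empty: "midx {} d = {\<lambda>_. undefined}"
  unfolding midx_def by simp

lemma ptranspose_override_on: "ptranspose V A a b = A (override_on a b V) (override_on b a V)"
  unfolding ptranspose_def override_on_def ..

lemma ptrace_override_on: "ptrace d S B a b = (\<Sum>u\<in>midx S d. B (override_on a u S) (override_on b u S))"
  unfolding ptrace_def override_on_def ..

lemma override_on_override_on_swap [simp]: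
  "override_on (override_on c e R) (override_on e c R) R = c"
  unfolding override_on_def by auto

lemma sum_midx_override_on_swap:
  "(\<Sum>c\<in>midx I d. \<Sum>e\<in>midx I d. H c e)
     = (\<Sum>c\<in>midx I d. \<Sum>e\<in>midx I d. H (override_on c e R) (override_on e c R))"
proof -
  have "(\<Sum>(c, e)\<in>midx I d \<times> midx I d. H c e)
      = (\<Sum>(c, e)\<in>midx I d \<times> midx I d. H (override_on c e R) (override_on e c R))"
    by (rule sum.reindex_bij_witness[where i="\<lambda>(c, e). (override_on c e R, override_on e c R)"
          and j="\<lambda>(c, e). (override_on c e R, override_on e c R)"])
       (auto simp: override_on_in_midx)
  then show ?thesis by (simp add: sum.cartesian_product)
qed

lemma tquad_ptranspose: "tquad d k (ptranspose V A) x = tquad d k A x"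
proof -
  have "(\<Prod>i\<in>{1..k}. x i (override_on a b V i) * x i (override_on b a V i))
      = (\<Prod>i\<in>{1..k}. x i (a i) * x i (b i))" for a b
    by (intro prod.cong refl) (auto simp: override_on_def mult.commute)
  then show ?thesis
    unfolding tquad_def ptranspose_override_on
    by (subst (2) sum_midx_override_on_swap[where R=V]) simp
qed

lemma tquad_ptavg: "tquad d k (ptavg k A) x = tquad d k A x"
proof -
  have "tquad d k (\<lambda>a b. r * (\<Sum>V\<in>P. F V a b)) x = r * (\<Sum>V\<in>P. tquad d k (F V) x)"
    for r P and F :: "nat set \<Rightarrow> (nat \<Rightarrow> nat) \<Rightarrow> (nat \<Rightarrow> nat) \<Rightarrow> real"
    unfolding tquad_def
    by (simp add: sum_distrib_left sum_distrib_right mult.assoc sum.swap[of _ P])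
  then have "tquad d k (ptavg k A) x = (1 / 2 ^ k) * (\<Sum>V\<in>Pow {1..k}. tquad d k (ptranspose V A) x)"
    unfolding ptavg_def[abs_def] .
  then show ?thesis
    by (simp add: tquad_ptranspose card_Pow)
qed

lemma ptranspose_ptranspose: "ptranspose R (ptranspose V A) = ptranspose (sym_diff V R) A"
  unfolding ptranspose_def by (intro ext arg_cong2[where f=A]) auto

lemma ptranspose_ptavg:
  assumes "R \<subseteq> {1..k}"
  shows "ptranspose R (ptavg k A) = ptavg k A"
proof (intro ext)
  fix a b
  have "(\<Sum>V\<in>Pow {1..k}. ptranspose (sym_diff V R) A a b) = (\<Sum>V\<in>Pow {1..k}. ptranspose V A a b)"
    by (rule sum.reindex_bij_witness[where i="\<lambda>V. sym_diff V R" and j="\<lambda>V. sym_diff V R"])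
       (use assms in auto)
  then show "ptranspose R (ptavg k A) a b = ptavg k A a b"
    unfolding ptavg_def ptranspose_ptranspose[symmetric] by (simp add: ptranspose_def)
qed

lemma prod_of_bool: "finite A \<Longrightarrow> (\<Prod>i\<in>A. of_bool (P i) :: 'a :: comm_semiring_1) = of_bool (\<forall>i\<in>A. P i)"
  by (induction A rule: finite_induct) auto

text \<open>If the coordinates of a random vector have moments \<open>1, 0, 1, 0, \<mu>\<^sub>4\<close>, then
  \<open>E[x\<^sub>p x\<^sub>q x\<^sub>r x\<^sub>s] = wick4 w p q r s\<close> with \<open>w p q = 1 - (3 - \<mu>\<^sub>4) / 2 * [p = q]\<close>;
  for Gaussian coordinates \<open>w = 1\<close> and this is Isserlis' theorem.\<close>

definition wick4 :: "(nat \<Rightarrow> nat \<Rightarrow> real) \<Rightarrow> nat \<Rightarrow> nat \<Rightarrow> nat \<Rightarrow> nat \<Rightarrow> real" where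
  "wick4 w p q r s = of_bool (p = q \<and> r = s) + w p q * (of_bool (p = r \<and> q = s) + of_bool (p = s \<and> q = r))"

definition weighted_frob2 :: "nat \<Rightarrow> nat set \<Rightarrow> (nat \<Rightarrow> nat \<Rightarrow> nat \<Rightarrow> real)
    \<Rightarrow> ((nat \<Rightarrow> nat) \<Rightarrow> (nat \<Rightarrow> nat) \<Rightarrow> real) \<Rightarrow> real" where
  "weighted_frob2 d T g C = (\<Sum>a\<in>midx T d. \<Sum>b\<in>midx T d. (C a b)\<^sup>2 * (\<Prod>i\<in>T. g i (a i) (b i)))"

lemma weighted_frob2_eq_frob2:
  assumes "\<And>i p q. i \<in> T \<Longrightarrow> g i p q = 1"
  shows "weighted_frob2 d T g C = frob2 d T C"
  unfolding weighted_frob2_def frob2_def using assms by (simp cong: prod.cong)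

lemma weighted_frob2_le_frob2:
  assumes "\<And>i p q. 0 \<le> g i p q \<and> g i p q \<le> 1"
  shows "weighted_frob2 d T g C \<le> frob2 d T C"
  unfolding weighted_frob2_def frob2_def
proof (intro sum_mono)
  fix a b
  have "(\<Prod>i\<in>T. g i (a i) (b i)) \<le> 1" by (rule prod_le_1) (use assms in auto)
  then show "(C a b)\<^sup>2 * (\<Prod>i\<in>T. g i (a i) (b i)) \<le> (C a b)\<^sup>2"
    by (simp add: mult_left_le)
qed

lemma weighted_frob2_ptrace_full:
  "weighted_frob2 d {} g (ptrace d I B) = (\<Sum>c\<in>midx I d. B c c)\<^sup>2"
proof -
  have "ptrace d I B (\<lambda>_. undefined) (\<lambda>_. undefined) = (\<Sum>c\<in>midx I d. B c c)"
    unfolding ptrace_def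
    by (intro sum.cong refl) (auto simp: midx_def PiE_iff extensional_def fun_eq_iff intro!: arg_cong2[where f=B])
  then show ?thesis unfolding weighted_frob2_def by (simp add: midx_empty)
qed

text \<open>A quadruple \<open>(a, b, c, e)\<close> paired as \<open>a = b, c = e\<close> on \<open>S\<close> and as \<open>a = c, b = e\<close> off \<open>S\<close>
  is determined by \<open>a, b\<close> off \<open>S\<close> and by \<open>a, c\<close> on \<open>S\<close>; summing out the latter two produces
  the two partial traces.\<close>

lemma sum_pairing_eq_weighted_frob2:
  assumes "finite I" "S \<subseteq> I"
  shows "(\<Sum>(a,b,c,e)\<in>midx I d \<times> midx I d \<times> midx I d \<times> midx I d.
            B a b * B c e * (\<Prod>i\<in>I-S. g i (a i) (b i)) *
            of_bool ((\<forall>i\<in>S. a i = b i \<and> c i = e i) \<and> (\<forall>i\<in>I-S. a i = c i \<and> b i = e i)))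
       = weighted_frob2 d (I - S) g (ptrace d S B)"
    (is "?L = ?R")
proof -
  let ?M = "midx I d" and ?MT = "midx (I-S) d" and ?MS = "midx S d"
  let ?ov = "\<lambda>a u. override_on a u S"
  define F where "F = (\<lambda>(a,b,c,e). B a b * B c e * (\<Prod>i\<in>I-S. g i (a i) (b i)))"
  define C where "C = (\<lambda>(a::nat\<Rightarrow>nat,b::nat\<Rightarrow>nat,c::nat\<Rightarrow>nat,e::nat\<Rightarrow>nat).
    (\<forall>i\<in>S. a i = b i \<and> c i = e i) \<and> (\<forall>i\<in>I-S. a i = c i \<and> b i = e i))"
  have "?L = (\<Sum>x\<in>{x\<in>?M \<times> ?M \<times> ?M \<times> ?M. C x}. F x)"
    by (subst sum.inter_filter) (auto simp: assms(1) F_def C_def intro!: sum.cong)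
  also have "\<dots> = (\<Sum>(a',b',u,v)\<in>?MT \<times> ?MT \<times> ?MS \<times> ?MS.
        B (?ov a' u) (?ov b' u) * B (?ov a' v) (?ov b' v) * (\<Prod>i\<in>I-S. g i (a' i) (b' i)))"
  proof (rule sum.reindex_bij_witness[symmetric,
        where j="\<lambda>(a',b',u,v). (?ov a' u, ?ov b' u, ?ov a' v, ?ov b' v)"
          and i="\<lambda>(a,b,c,e). (restrict a (I-S), restrict b (I-S), restrict a S, restrict c S)"], goal_cases)
    case (1 y)
    then show ?case
      by (auto simp: midx_def override_on_def PiE_iff extensional_def fun_eq_iff)
  next
    case (2 y)
    then show ?case
      using assms(2) by (auto simp: C_def override_on_in_midx_Diff)
  next
    case (3 x)
    then show ?case
      using assms(2) by (auto simp: midx_def override_on_def PiE_iff extensional_def C_def fun_eq_iff)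
  next
    case (4 x)
    then show ?case
      using assms(2) by (auto simp: restrict_in_midx)
  next
    case (5 y)
    then show ?case
      by (auto simp: F_def intro!: prod.cong)
  qed
  also have "\<dots> = (\<Sum>a'\<in>?MT. \<Sum>b'\<in>?MT. \<Sum>u\<in>?MS. \<Sum>v\<in>?MS.
        B (?ov a' u) (?ov b' u) * B (?ov a' v) (?ov b' v) * (\<Prod>i\<in>I-S. g i (a' i) (b' i)))"
    by (simp add: sum.cartesian_product)
  also have "\<dots> = ?R"
    unfolding weighted_frob2_def ptrace_override_on power2_eq_square sum_product
    unfolding sum_distrib_right ..
  finally show ?thesis .
qed

text \<open>Choosing on each subsystem in \<open>I - S\<close> one of the two crossed pairings gives a term that
  does not depend on the choice: swapping \<open>c\<close> and \<open>e\<close> on the subsystems \<open>R\<close> where the pairing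
  \<open>a = e, b = c\<close> was chosen turns it into \<open>a = c, b = e\<close>, and \<open>B\<close> is invariant under this
  partial transpose.\<close>

lemma sum_wick_term_eq_weighted_frob2:
  assumes I: "finite I" and S: "S \<subseteq> I" and W: "W \<subseteq> I - S"
    and inv: "\<And>R. R \<subseteq> I \<Longrightarrow> ptranspose R B = B"
  shows "(\<Sum>(a,b,c,e)\<in>midx I d \<times> midx I d \<times> midx I d \<times> midx I d.
            B a b * B c e * ((\<Prod>i\<in>S. of_bool (a i = b i \<and> c i = e i)) *
              ((\<Prod>i\<in>W. g i (a i) (b i) * of_bool (a i = c i \<and> b i = e i)) *
               (\<Prod>i\<in>I - S - W. g i (a i) (b i) * of_bool (a i = e i \<and> b i = c i)))))
       = weighted_frob2 d (I - S) g (ptrace d S B)"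
proof -
  define R where "R = I - S - W"
  have fin: "finite S" "finite W" "finite R"
    using I S W unfolding R_def by (auto intro: finite_subset)
  have TWR: "I - S = W \<union> R" "W \<inter> R = {}" using W unfolding R_def by auto
  have invR: "B (override_on c e R) (override_on e c R) = B c e" for c e
  proof -
    have "R \<subseteq> I" unfolding R_def by auto
    then have "ptranspose R B c e = B c e" using inv by simp
    then show ?thesis by (simp add: ptranspose_override_on)
  qed
  let ?Q = "midx I d \<times> midx I d \<times> midx I d \<times> midx I d"
  let ?ov = "\<lambda>c e. override_on c e R"
  have factor: "B a b * B c e * ((\<Prod>i\<in>S. of_bool (a i = b i \<and> c i = e i)) *
              ((\<Prod>i\<in>W. g i (a i) (b i) * of_bool (a i = c i \<and> b i = e i)) *
               (\<Prod>i\<in>R. g i (a i) (b i) * of_bool (a i = e i \<and> b i = c i))))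
      = B a b * B c e * (\<Prod>i\<in>I-S. g i (a i) (b i)) *
         of_bool ((\<forall>i\<in>S. a i = b i \<and> c i = e i) \<and> (\<forall>i\<in>W. a i = c i \<and> b i = e i)
           \<and> (\<forall>i\<in>R. a i = e i \<and> b i = c i))"
    for a b c e
    by (simp add: prod.distrib prod_of_bool fin TWR prod.union_disjoint)
  have pairing: "((\<forall>i\<in>S. a i = b i \<and> ?ov c e i = ?ov e c i) \<and> (\<forall>i\<in>W. a i = ?ov c e i \<and> b i = ?ov e c i)
            \<and> (\<forall>i\<in>R. a i = ?ov e c i \<and> b i = ?ov c e i)) =
          ((\<forall>i\<in>S. a i = b i \<and> c i = e i) \<and> (\<forall>i\<in>I-S. a i = c i \<and> b i = e i))" for a b c e
    using TWR unfolding override_on_def R_def by auto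
  have "(\<Sum>(a,b,c,e)\<in>?Q. B a b * B c e * (\<Prod>i\<in>I-S. g i (a i) (b i)) *
         of_bool ((\<forall>i\<in>S. a i = b i \<and> c i = e i) \<and> (\<forall>i\<in>W. a i = c i \<and> b i = e i)
           \<and> (\<forall>i\<in>R. a i = e i \<and> b i = c i)))
      = (\<Sum>(a,b,c,e)\<in>?Q. B a b * B (?ov c e) (?ov e c) * (\<Prod>i\<in>I-S. g i (a i) (b i)) *
         of_bool ((\<forall>i\<in>S. a i = b i \<and> ?ov c e i = ?ov e c i) \<and> (\<forall>i\<in>W. a i = ?ov c e i \<and> b i = ?ov e c i)
            \<and> (\<forall>i\<in>R. a i = ?ov e c i \<and> b i = ?ov c e i)))"
    by (rule sum.reindex_bij_witness[where i="\<lambda>(a,b,c,e). (a, b, ?ov c e, ?ov e c)"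
          and j="\<lambda>(a,b,c,e). (a, b, ?ov c e, ?ov e c)"])
       (auto simp: override_on_in_midx)
  also have "\<dots> = (\<Sum>(a,b,c,e)\<in>?Q. B a b * B c e * (\<Prod>i\<in>I-S. g i (a i) (b i)) *
         of_bool ((\<forall>i\<in>S. a i = b i \<and> c i = e i) \<and> (\<forall>i\<in>I-S. a i = c i \<and> b i = e i)))"
    by (simp only: pairing invR)
  also have "\<dots> = weighted_frob2 d (I - S) g (ptrace d S B)"
    by (rule sum_pairing_eq_weighted_frob2[OF I S])
  finally show ?thesis
    unfolding R_def[symmetric] factor .
qed

lemma sum_wick4_expansion:
  assumes I: "finite I" and inv: "\<And>R. R \<subseteq> I \<Longrightarrow> ptranspose R B = B"
  shows "(\<Sum>(a,b,c,e)\<in>midx I d \<times> midx I d \<times> midx I d \<times> midx I d.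
            B a b * B c e * (\<Prod>i\<in>I. wick4 (g i) (a i) (b i) (c i) (e i)))
       = (\<Sum>S\<in>Pow I. 2 ^ card (I - S) * weighted_frob2 d (I - S) g (ptrace d S B))"
proof -
  let ?Q = "midx I d \<times> midx I d \<times> midx I d \<times> midx I d"
  let ?F = "\<lambda>S W a b c e. B a b * B c e * ((\<Prod>i\<in>S. of_bool (a i = b i \<and> c i = e i)) *
              ((\<Prod>i\<in>W. g i (a i) (b i) * of_bool (a i = c i \<and> b i = e i)) *
               (\<Prod>i\<in>I - S - W. g i (a i) (b i) * of_bool (a i = e i \<and> b i = c i))))"
  have expand: "B a b * B c e * (\<Prod>i\<in>I. wick4 (g i) (a i) (b i) (c i) (e i))
      = (\<Sum>S\<in>Pow I. \<Sum>W\<in>Pow (I - S). ?F S W a b c e)" for a b c e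
  proof -
    have "(\<Prod>i\<in>I. wick4 (g i) (a i) (b i) (c i) (e i)) = (\<Prod>i\<in>I. of_bool (a i = b i \<and> c i = e i) +
          (g i (a i) (b i) * of_bool (a i = c i \<and> b i = e i) + g i (a i) (b i) * of_bool (a i = e i \<and> b i = c i)))"
      unfolding wick4_def by (intro prod.cong refl) (auto simp: algebra_simps)
    also have "\<dots> = (\<Sum>S\<in>Pow I. (\<Prod>i\<in>S. of_bool (a i = b i \<and> c i = e i)) *
        (\<Prod>i\<in>I - S. g i (a i) (b i) * of_bool (a i = c i \<and> b i = e i)
           + g i (a i) (b i) * of_bool (a i = e i \<and> b i = c i)))"
      by (rule prod_add[OF I])
    also have "\<dots> = (\<Sum>S\<in>Pow I. (\<Prod>i\<in>S. of_bool (a i = b i \<and> c i = e i)) *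
        (\<Sum>W\<in>Pow (I - S). (\<Prod>i\<in>W. g i (a i) (b i) * of_bool (a i = c i \<and> b i = e i)) *
               (\<Prod>i\<in>I - S - W. g i (a i) (b i) * of_bool (a i = e i \<and> b i = c i))))"
      using I by (intro sum.cong refl arg_cong2[where f="(*)"] prod_add) auto
    finally show ?thesis by (simp add: sum_distrib_left)
  qed
  have "(\<Sum>(a,b,c,e)\<in>?Q. B a b * B c e * (\<Prod>i\<in>I. wick4 (g i) (a i) (b i) (c i) (e i)))
      = (\<Sum>S\<in>Pow I. \<Sum>W\<in>Pow (I - S). \<Sum>(a,b,c,e)\<in>?Q. ?F S W a b c e)"
    by (simp only: expand) (subst sum.swap, simp add: split_def sum.swap[of _ "Pow _"])
  also have "\<dots> = (\<Sum>S\<in>Pow I. \<Sum>W\<in>Pow (I - S). weighted_frob2 d (I - S) g (ptrace d S B))"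
    using I inv by (intro sum.cong refl sum_wick_term_eq_weighted_frob2) auto
  also have "\<dots> = (\<Sum>S\<in>Pow I. 2 ^ card (I - S) * weighted_frob2 d (I - S) g (ptrace d S B))"
    using I by (simp add: card_Pow)
  finally show ?thesis .
qed

lemma prod_list_eq_prod_power_count_list:
  fixes x :: "nat \<Rightarrow> 'a :: comm_monoid_mult"
  assumes "set ps \<subseteq> {..<d}"
  shows "prod_list (map x ps) = (\<Prod>j<d. x j ^ count_list ps j)"
  using assms
proof (induction ps)
  case (Cons p ps)
  have "(\<Prod>j<d. x j ^ count_list (p # ps) j) = (\<Prod>j<d. (if p = j then x j else 1)) * (\<Prod>j<d. x j ^ count_list ps j)"
    by (subst prod.distrib[symmetric]) (auto intro!: prod.cong)
  also have "(\<Prod>j<d. (if p = j then x j else 1)) = x p"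
    using Cons.prems by (subst prod.delta') auto
  finally show ?case using Cons by simp
qed simp

lemma prod_moment_count_list_pair:
  fixes \<mu> :: "nat \<Rightarrow> real" and p q d :: nat
  assumes "\<mu> 0 = 1" "\<mu> 1 = 0" "\<mu> 2 = 1" "p < d" "q < d"
  shows "(\<Prod>j<d. \<mu> (count_list [p, q] j)) = of_bool (p = q)"
proof -
  have "(\<Prod>j<d. \<mu> (count_list [p, q] j)) = (\<Prod>j\<in>{p, q}. \<mu> (count_list [p, q] j))"
    using assms by (intro prod.mono_neutral_right) auto
  also have "\<dots> = of_bool (p = q)"
    using assms(1-3) by (cases "p = q") (simp_all add: numeral_eq_Suc)
  finally show ?thesis .
qed

lemma prod_moment_count_list_quadruple:
  fixes \<mu> :: "nat \<Rightarrow> real" and p q r s d :: nat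
  assumes "\<mu> 0 = 1" "\<mu> 1 = 0" "\<mu> 2 = 1" "\<mu> 3 = 0" "p < d" "q < d" "r < d" "s < d"
  shows "(\<Prod>j<d. \<mu> (count_list [p, q, r, s] j))
      = wick4 (\<lambda>p q. 1 - (3 - \<mu> 4) / 2 * of_bool (p = q)) p q r s"
proof -
  have "(\<Prod>j<d. \<mu> (count_list [p, q, r, s] j)) = (\<Prod>j\<in>{p, q, r, s}. \<mu> (count_list [p, q, r, s] j))"
    using assms by (intro prod.mono_neutral_right) auto
  also have "\<dots> = wick4 (\<lambda>p q. 1 - (3 - \<mu> 4) / 2 * of_bool (p = q)) p q r s"
    using assms(1-4) unfolding wick4_def
    by (cases "p = q"; cases "p = r"; cases "p = s"; cases "q = r"; cases "q = s"; cases "r = s")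
       (simp_all add: numeral_eq_Suc insert_commute field_simps)
  finally show ?thesis .
qed

definition gaussian_moment :: "nat \<Rightarrow> real" where
  "gaussian_moment n = (if even n then fact n / (2 ^ (n div 2) * fact (n div 2)) else 0)"

definition rademacher_moment :: "nat \<Rightarrow> real" where
  "rademacher_moment n = of_bool (even n)"

context prob_space
begin

lemma gaussian_rv_moment:
  assumes "gaussian_rv M Y"
  shows "integrable M (\<lambda>\<omega>. Y \<omega> ^ n) \<and> expectation (\<lambda>\<omega>. Y \<omega> ^ n) = gaussian_moment n"
proof
  have D: "distributed M lborel Y std_normal_density" using assms unfolding gaussian_rv_def .
  show "integrable M (\<lambda>\<omega>. Y \<omega> ^ n)"
    using distributed_integrable[OF D, of "\<lambda>x. x ^ n"] integrable_std_normal_moment[of n]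
    by (auto simp: normal_density_nonneg)
  have "expectation (\<lambda>\<omega>. Y \<omega> ^ n) = (\<integral>x. std_normal_density x * x ^ n \<partial>lborel)"
    using distributed_integral[OF D, of "\<lambda>x. x ^ n"] by (auto simp: normal_density_nonneg)
  also have "\<dots> = gaussian_moment n"
  proof (cases "even n")
    case True
    then obtain m where "n = 2 * m" by auto
    then show ?thesis using integral_std_normal_moment_even[of m] by (simp add: gaussian_moment_def)
  next
    case False
    then obtain m where "n = 2 * m + 1" using oddE by blast
    then show ?thesis using integral_std_normal_moment_odd[of m] by (simp add: gaussian_moment_def)
  qed
  finally show "expectation (\<lambda>\<omega>. Y \<omega> ^ n) = gaussian_moment n" .
qed

lemma rademacher_rv_AE_sign:
  assumes "rademacher_rv M Y"
  shows "AE \<omega> in M. Y \<omega> = 1 \<or> Y \<omega> = -1"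
proof -
  have [measurable]: "Y \<in> borel_measurable M" using assms unfolding rademacher_rv_def by simp
  define E where "E = {\<omega> \<in> space M. Y \<omega> = 1} \<union> {\<omega> \<in> space M. Y \<omega> = -1}"
  have [measurable]: "E \<in> events" unfolding E_def by measurable
  have "prob E = prob {\<omega> \<in> space M. Y \<omega> = 1} + prob {\<omega> \<in> space M. Y \<omega> = -1}"
    unfolding E_def by (rule finite_measure_Union) auto
  then have "prob E = 1" using assms unfolding rademacher_rv_def by simp
  then have "AE \<omega> in M. \<omega> \<in> E" using AE_in_set_eq_1[of E] by simp
  then show ?thesis by eventually_elim (auto simp: E_def)
qed

lemma rademacher_rv_moment:
  assumes "rademacher_rv M Y"
  shows "integrable M (\<lambda>\<omega>. Y \<omega> ^ n) \<and> expectation (\<lambda>\<omega>. Y \<omega> ^ n) = rademacher_moment n"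
proof -
  have [measurable]: "Y \<in> borel_measurable M" using assms unfolding rademacher_rv_def by simp
  define E1 where "E1 = {\<omega> \<in> space M. Y \<omega> = 1}"
  define E2 where "E2 = {\<omega> \<in> space M. Y \<omega> = -1}"
  have E[measurable]: "E1 \<in> events" "E2 \<in> events" unfolding E1_def E2_def by measurable
  have sign: "AE \<omega> in M. Y \<omega> = 1 \<or> Y \<omega> = -1" by (rule rademacher_rv_AE_sign[OF assms])
  have int: "integrable M (\<lambda>\<omega>. Y \<omega> ^ n)"
    by (rule integrable_const_bound[where B=1])
       (use sign in \<open>auto elim!: eventually_mono simp: abs_power_minus\<close>)
  show ?thesis
  proof (cases "even n")
    case True
    have "expectation (\<lambda>\<omega>. Y \<omega> ^ n) = expectation (\<lambda>\<omega>. 1)"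
      by (rule integral_cong_AE) (use sign True in \<open>auto elim!: eventually_mono\<close>)
    then show ?thesis using int True by (simp add: rademacher_moment_def prob_space)
  next
    case False
    have "expectation (\<lambda>\<omega>. Y \<omega> ^ n) = expectation (\<lambda>\<omega>. indicator E1 \<omega> - indicator E2 \<omega>)"
      by (rule integral_cong_AE)
         (use sign False in \<open>auto elim!: eventually_mono simp: E1_def E2_def indicator_def\<close>)
    also have "\<dots> = prob E1 - prob E2"
      by (subst Bochner_Integration.integral_diff) (auto simp: E emeasure_eq_measure)
    finally show ?thesis
      using int False assms unfolding rademacher_rv_def E1_def E2_def by (simp add: rademacher_moment_def)
  qed
qed

end

lemma tquad_eq_sum_pairs:
  "tquad d k B x = (\<Sum>(a,b)\<in>midx {1..k} d \<times> midx {1..k} d. B a b * (\<Prod>i\<in>{1..k}. x i (a i) * x i (b i)))"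
  unfolding tquad_def by (simp add: sum.cartesian_product)

lemma tquad_squared_eq_sum_quadruples:
  "(tquad d k B x)\<^sup>2 = (\<Sum>(a,b,c,e)\<in>midx {1..k} d \<times> midx {1..k} d \<times> midx {1..k} d \<times> midx {1..k} d.
      B a b * B c e * (\<Prod>i\<in>{1..k}. x i (a i) * x i (b i) * (x i (c i) * x i (e i))))"
proof -
  let ?M = "midx {1..k} d" and ?x = "\<lambda>a b. \<Prod>i\<in>{1..k}. x i (a i) * x i (b i)"
  have "(tquad d k B x)\<^sup>2 = (\<Sum>a\<in>?M. \<Sum>b\<in>?M. B a b * ?x a b) * (\<Sum>c\<in>?M. \<Sum>e\<in>?M. B c e * ?x c e)"
    unfolding tquad_def power2_eq_square ..
  also have "\<dots> = (\<Sum>a\<in>?M. \<Sum>b\<in>?M. \<Sum>c\<in>?M. \<Sum>e\<in>?M. B a b * B c e * (?x a b * ?x c e))"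
    unfolding sum_distrib_right sum_distrib_left by (simp add: mult_ac)
  finally show ?thesis by (simp add: sum.cartesian_product prod.distrib)
qed

locale tensor_coordinates = prob_space M for M :: "'s measure" +
  fixes d k :: nat and X :: "nat \<Rightarrow> nat \<Rightarrow> 's \<Rightarrow> real" and \<mu> :: "nat \<Rightarrow> nat \<Rightarrow> real"
  assumes indep_coordinates: "indep_vars (\<lambda>_. borel) (\<lambda>p. X (fst p) (snd p)) ({1..k} \<times> {..<d})"
    and coordinate_moment: "i \<in> {1..k} \<Longrightarrow> j < d \<Longrightarrow>
      integrable M (\<lambda>\<omega>. X i j \<omega> ^ n) \<and> expectation (\<lambda>\<omega>. X i j \<omega> ^ n) = \<mu> i n"
    and low_moments: "i \<in> {1..k} \<Longrightarrow> \<mu> i 1 = 0 \<and> \<mu> i 2 = 1 \<and> \<mu> i 3 = 0"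
begin

definition wick_weight :: "nat \<Rightarrow> nat \<Rightarrow> nat \<Rightarrow> real" where
  "wick_weight i p q = 1 - (3 - \<mu> i 4) / 2 * of_bool (p = q)"

lemma moment_zero: "i \<in> {1..k} \<Longrightarrow> j < d \<Longrightarrow> \<mu> i 0 = 1"
  using coordinate_moment[of i j 0] by (simp add: prob_space)

lemma expectation_prod_coordinates:
  assumes "set ts \<subseteq> midx {1..k} d"
  shows "integrable M (\<lambda>\<omega>. \<Prod>i\<in>{1..k}. prod_list (map (\<lambda>t. X i (t i) \<omega>) ts)) \<and>
    expectation (\<lambda>\<omega>. \<Prod>i\<in>{1..k}. prod_list (map (\<lambda>t. X i (t i) \<omega>) ts)) =
      (\<Prod>i\<in>{1..k}. \<Prod>j<d. \<mu> i (count_list (map (\<lambda>t. t i) ts) j))"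
proof -
  let ?P = "{1..k} \<times> {..<d}"
  define c where "c = (\<lambda>i j. count_list (map (\<lambda>t. t i) ts) j)"
  have as_powers: "(\<Prod>i\<in>{1..k}. prod_list (map (\<lambda>t. X i (t i) \<omega>) ts))
      = (\<Prod>p\<in>?P. X (fst p) (snd p) \<omega> ^ c (fst p) (snd p))" for \<omega>
  proof -
    have "set (map (\<lambda>t. t i) ts) \<subseteq> {..<d}" if "i \<in> {1..k}" for i
      using assms that unfolding midx_def by (auto simp: PiE_iff)
    then have "prod_list (map (\<lambda>t. X i (t i) \<omega>) ts) = (\<Prod>j<d. X i j \<omega> ^ c i j)" if "i \<in> {1..k}" for i
      using prod_list_eq_prod_power_count_list[of "map (\<lambda>t. t i) ts" d "\<lambda>j. X i j \<omega>"] that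
      unfolding c_def by (simp add: comp_def)
    then show ?thesis by (simp add: prod.cartesian_product split_def)
  qed
  have indep_powers: "indep_vars (\<lambda>_. borel) (\<lambda>p \<omega>. X (fst p) (snd p) \<omega> ^ c (fst p) (snd p)) ?P"
    by (rule indep_vars_compose2[OF indep_coordinates, where Y="\<lambda>p x. x ^ c (fst p) (snd p)"]) measurable
  have integrable_powers: "integrable M (\<lambda>\<omega>. X (fst p) (snd p) \<omega> ^ c (fst p) (snd p))" if "p \<in> ?P" for p
    using coordinate_moment that by auto
  have "integrable M (\<lambda>\<omega>. \<Prod>p\<in>?P. X (fst p) (snd p) \<omega> ^ c (fst p) (snd p))"
    by (rule indep_vars_integrable[OF _ indep_powers]) (use integrable_powers in auto)
  moreover have "expectation (\<lambda>\<omega>. \<Prod>p\<in>?P. X (fst p) (snd p) \<omega> ^ c (fst p) (snd p))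
      = (\<Prod>p\<in>?P. expectation (\<lambda>\<omega>. X (fst p) (snd p) \<omega> ^ c (fst p) (snd p)))"
    by (rule indep_vars_lebesgue_integral[OF _ indep_powers]) (use integrable_powers in auto)
  moreover have "\<dots> = (\<Prod>p\<in>?P. \<mu> (fst p) (c (fst p) (snd p)))"
    using coordinate_moment by (intro prod.cong) auto
  moreover have "\<dots> = (\<Prod>i\<in>{1..k}. \<Prod>j<d. \<mu> i (c i j))"
    by (simp add: prod.cartesian_product split_def)
  ultimately show ?thesis unfolding as_powers c_def by simp
qed

lemma expectation_coordinate_pair:
  assumes "a \<in> midx {1..k} d" "b \<in> midx {1..k} d"
  shows "integrable M (\<lambda>\<omega>. \<Prod>i\<in>{1..k}. X i (a i) \<omega> * X i (b i) \<omega>) \<and>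
    expectation (\<lambda>\<omega>. \<Prod>i\<in>{1..k}. X i (a i) \<omega> * X i (b i) \<omega>) = of_bool (a = b)"
proof -
  have "(\<Prod>j<d. \<mu> i (count_list [a i, b i] j)) = of_bool (a i = b i)" if "i \<in> {1..k}" for i
  proof -
    have "a i < d" "b i < d" using assms that by (auto simp: midx_def)
    then show ?thesis
      using low_moments[OF that] moment_zero[OF that \<open>a i < d\<close>] by (intro prod_moment_count_list_pair) auto
  qed
  then have "(\<Prod>i\<in>{1..k}. \<Prod>j<d. \<mu> i (count_list [a i, b i] j)) = of_bool (\<forall>i\<in>{1..k}. a i = b i)"
    by (simp add: prod_of_bool)
  also have "(\<forall>i\<in>{1..k}. a i = b i) \<longleftrightarrow> a = b"
    using assms unfolding midx_def by (auto intro: PiE_ext)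
  finally show ?thesis
    using expectation_prod_coordinates[of "[a, b]"] assms by simp
qed

lemma expectation_coordinate_quadruple:
  assumes "a \<in> midx {1..k} d" "b \<in> midx {1..k} d" "c \<in> midx {1..k} d" "e \<in> midx {1..k} d"
  shows "integrable M (\<lambda>\<omega>. \<Prod>i\<in>{1..k}. X i (a i) \<omega> * X i (b i) \<omega> * (X i (c i) \<omega> * X i (e i) \<omega>)) \<and>
    expectation (\<lambda>\<omega>. \<Prod>i\<in>{1..k}. X i (a i) \<omega> * X i (b i) \<omega> * (X i (c i) \<omega> * X i (e i) \<omega>))
      = (\<Prod>i\<in>{1..k}. wick4 (wick_weight i) (a i) (b i) (c i) (e i))"
proof -
  have "(\<Prod>j<d. \<mu> i (count_list [a i, b i, c i, e i] j)) = wick4 (wick_weight i) (a i) (b i) (c i) (e i)"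
    if "i \<in> {1..k}" for i
  proof -
    have "a i < d" "b i < d" "c i < d" "e i < d" using assms that by (auto simp: midx_def)
    then show ?thesis
      using low_moments[OF that] moment_zero[OF that \<open>a i < d\<close>] unfolding wick_weight_def
      by (intro prod_moment_count_list_quadruple) auto
  qed
  then show ?thesis
    using expectation_prod_coordinates[of "[a, b, c, e]"] assms by (simp add: mult.assoc)
qed

lemma expectation_tquad:
  "integrable M (\<lambda>\<omega>. tquad d k B (\<lambda>i j. X i j \<omega>)) \<and>
   expectation (\<lambda>\<omega>. tquad d k B (\<lambda>i j. X i j \<omega>)) = (\<Sum>a\<in>midx {1..k} d. B a a)"
proof -
  let ?M = "midx {1..k} d" and ?x = "\<lambda>a b \<omega>. \<Prod>i\<in>{1..k}. X i (a i) \<omega> * X i (b i) \<omega>"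
  have int: "integrable M (?x a b)" and exp: "expectation (?x a b) = of_bool (a = b)"
    if "(a, b) \<in> ?M \<times> ?M" for a b
    using expectation_coordinate_pair that by auto
  have "integrable M (\<lambda>\<omega>. \<Sum>(a,b)\<in>?M \<times> ?M. B a b * ?x a b \<omega>)"
    using int by (auto intro!: Bochner_Integration.integrable_sum integrable_mult_right)
  moreover have "expectation (\<lambda>\<omega>. \<Sum>(a,b)\<in>?M \<times> ?M. B a b * ?x a b \<omega>)
      = (\<Sum>(a,b)\<in>?M \<times> ?M. B a b * of_bool (a = b))"
    using int exp by (subst Bochner_Integration.integral_sum) (auto intro!: sum.cong)
  moreover have "(\<Sum>(a,b)\<in>?M \<times> ?M. B a b * of_bool (a = b)) = (\<Sum>a\<in>?M. B a a)"
    by (simp add: sum.cartesian_product[symmetric] of_bool_def if_distrib sum.delta cong: if_cong)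
  ultimately show ?thesis
    unfolding tquad_eq_sum_pairs by simp
qed

lemma expectation_tquad_squared:
  "integrable M (\<lambda>\<omega>. (tquad d k B (\<lambda>i j. X i j \<omega>))\<^sup>2) \<and>
   expectation (\<lambda>\<omega>. (tquad d k B (\<lambda>i j. X i j \<omega>))\<^sup>2)
     = (\<Sum>(a,b,c,e)\<in>midx {1..k} d \<times> midx {1..k} d \<times> midx {1..k} d \<times> midx {1..k} d.
          B a b * B c e * (\<Prod>i\<in>{1..k}. wick4 (wick_weight i) (a i) (b i) (c i) (e i)))"
proof -
  let ?M = "midx {1..k} d"
  let ?x = "\<lambda>a b c e \<omega>. \<Prod>i\<in>{1..k}. X i (a i) \<omega> * X i (b i) \<omega> * (X i (c i) \<omega> * X i (e i) \<omega>)"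
  have int: "integrable M (?x a b c e)"
    and exp: "expectation (?x a b c e) = (\<Prod>i\<in>{1..k}. wick4 (wick_weight i) (a i) (b i) (c i) (e i))"
    if "(a, b, c, e) \<in> ?M \<times> ?M \<times> ?M \<times> ?M" for a b c e
    using expectation_coordinate_quadruple that by auto
  have "integrable M (\<lambda>\<omega>. \<Sum>(a,b,c,e)\<in>?M \<times> ?M \<times> ?M \<times> ?M. B a b * B c e * ?x a b c e \<omega>)"
    using int by (auto intro!: Bochner_Integration.integrable_sum integrable_mult_right)
  moreover have "expectation (\<lambda>\<omega>. \<Sum>(a,b,c,e)\<in>?M \<times> ?M \<times> ?M \<times> ?M. B a b * B c e * ?x a b c e \<omega>)
      = (\<Sum>(a,b,c,e)\<in>?M \<times> ?M \<times> ?M \<times> ?M.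
          B a b * B c e * (\<Prod>i\<in>{1..k}. wick4 (wick_weight i) (a i) (b i) (c i) (e i)))"
    using int exp by (subst Bochner_Integration.integral_sum) (auto intro!: sum.cong)
  ultimately show ?thesis
    unfolding tquad_squared_eq_sum_quadruples by simp
qed

text \<open>The average of all partial transposes has the same quadratic form and is invariant
  under every partial transpose, which is what collapses the Wick expansion of \<open>E[q\<^sup>2]\<close>.
  The pairing of all subsystems by traces contributes \<open>(E q)\<^sup>2\<close>.\<close>

lemma variance_tquad:
  "variance (\<lambda>\<omega>. tquad d k A (\<lambda>i j. X i j \<omega>))
     = (\<Sum>S\<in>{S. S \<subset> {1..k}}. 2 ^ (k - card S) * weighted_frob2 d ({1..k} - S) wick_weight (ptrace d S (ptavg k A)))"
proof -
  let ?B = "ptavg k A" and ?I = "{1..k}"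
  let ?q = "\<lambda>\<omega>. tquad d k ?B (\<lambda>i j. X i j \<omega>)"
  let ?W = "\<lambda>S. 2 ^ card (?I - S) * weighted_frob2 d (?I - S) wick_weight (ptrace d S ?B)"
  have "variance (\<lambda>\<omega>. tquad d k A (\<lambda>i j. X i j \<omega>)) = variance ?q"
    by (simp add: tquad_ptavg)
  also have "\<dots> = expectation (\<lambda>\<omega>. (?q \<omega>)\<^sup>2) - (expectation ?q)\<^sup>2"
    by (rule variance_eq) (use expectation_tquad expectation_tquad_squared in auto)
  also have "expectation (\<lambda>\<omega>. (?q \<omega>)\<^sup>2) = (\<Sum>S\<in>Pow ?I. ?W S)"
    using expectation_tquad_squared sum_wick4_expansion[OF _ ptranspose_ptavg] by simp
  also have "Pow ?I = insert ?I {S. S \<subset> ?I}"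
    by auto
  also have "(\<Sum>S\<in>insert ?I {S. S \<subset> ?I}. ?W S) = ?W ?I + (\<Sum>S\<in>{S. S \<subset> ?I}. ?W S)"
    by (rule sum.insert) (rule finite_subset[of _ "Pow ?I"], auto)
  also have "?W ?I = (expectation ?q)\<^sup>2"
    using expectation_tquad by (simp add: weighted_frob2_ptrace_full)
  also have "(\<Sum>S\<in>{S. S \<subset> ?I}. ?W S)
      = (\<Sum>S\<in>{S. S \<subset> ?I}. 2 ^ (k - card S) * weighted_frob2 d (?I - S) wick_weight (ptrace d S ?B))"
    by (intro sum.cong refl) (auto simp: card_Diff_subset finite_subset)
  finally show ?thesis by simp
qed

end

theorem theorem1:
  fixes M :: "'s measure" and d k :: nat
    and A :: "(nat \<Rightarrow> nat) \<Rightarrow> (nat \<Rightarrow> nat) \<Rightarrow> real"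
    and X :: "nat \<Rightarrow> nat \<Rightarrow> 's \<Rightarrow> real"
  assumes "prob_space M"
    and "prob_space.indep_vars M (\<lambda>_. borel) (\<lambda>p. X (fst p) (snd p)) ({1..k} \<times> {..<d})"
    and "\<forall>i\<in>{1..k}. (\<forall>j<d. rademacher_rv M (X i j)) \<or> (\<forall>j<d. gaussian_rv M (X i j))"
  shows "prob_space.variance M (\<lambda>\<omega>. tquad d k A (\<lambda>i j. X i j \<omega>))
           \<le> (\<Sum>S\<in>{S. S \<subset> {1..k}}. 2 ^ (k - card S) * frob2 d ({1..k} - S) (ptrace d S (ptavg k A)))
       \<and> ((\<forall>i\<in>{1..k}. \<forall>j<d. gaussian_rv M (X i j)) \<longrightarrow>
           prob_space.variance M (\<lambda>\<omega>. tquad d k A (\<lambda>i j. X i j \<omega>))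
           = (\<Sum>S\<in>{S. S \<subset> {1..k}}. 2 ^ (k - card S) * frob2 d ({1..k} - S) (ptrace d S (ptavg k A))))"
proof -
  interpret prob_space M by fact
  define gaussian where "gaussian i \<longleftrightarrow> (\<forall>j<d. gaussian_rv M (X i j))" for i
  define \<mu> where "\<mu> i = (if gaussian i then gaussian_moment else rademacher_moment)" for i
  interpret tensor_coordinates M d k X \<mu>
  proof
    fix i j n assume i: "i \<in> {1..k}" and j: "j < d"
    show "integrable M (\<lambda>\<omega>. X i j \<omega> ^ n) \<and> expectation (\<lambda>\<omega>. X i j \<omega> ^ n) = \<mu> i n"
    proof (cases "gaussian i")
      case True
      then show ?thesis using gaussian_rv_moment j by (simp add: \<mu>_def gaussian_def)
    next
      case False
      then have "rademacher_rv M (X i j)" using assms(3) i j by (auto simp: gaussian_def)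
      then show ?thesis using rademacher_rv_moment False by (simp add: \<mu>_def)
    qed
  qed (use assms(2) in \<open>auto simp: \<mu>_def gaussian_moment_def rademacher_moment_def fact_numeral\<close>)
  let ?F = "\<lambda>S. frob2 d ({1..k} - S) (ptrace d S (ptavg k A))"
  have "0 \<le> wick_weight i p q \<and> wick_weight i p q \<le> 1" for i p q
    by (simp add: wick_weight_def \<mu>_def gaussian_moment_def rademacher_moment_def fact_numeral)
  then have "weighted_frob2 d ({1..k} - S) wick_weight (ptrace d S (ptavg k A)) \<le> ?F S" for S
    by (rule weighted_frob2_le_frob2)
  then have "variance (\<lambda>\<omega>. tquad d k A (\<lambda>i j. X i j \<omega>)) \<le> (\<Sum>S\<in>{S. S \<subset> {1..k}}. 2 ^ (k - card S) * ?F S)"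
    unfolding variance_tquad by (intro sum_mono mult_left_mono) auto
  moreover have "variance (\<lambda>\<omega>. tquad d k A (\<lambda>i j. X i j \<omega>)) = (\<Sum>S\<in>{S. S \<subset> {1..k}}. 2 ^ (k - card S) * ?F S)"
    if "\<forall>i\<in>{1..k}. gaussian i"
    unfolding variance_tquad using that
    by (intro sum.cong refl arg_cong2[where f="(*)"] weighted_frob2_eq_frob2)
       (simp add: wick_weight_def \<mu>_def gaussian_moment_def fact_numeral)
  ultimately show ?thesis unfolding gaussian_def by blast
qed

end
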